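(* Let $\mathcal H$ be a non-trivial basic hereditary $\mathcal L$-property and let $\mathcal M\in\mathcal H$ be countably infinite. Then for all sufficiently large $n$, the number of $\mathcal N\in\mathcal H_n$ that are compatible with $\mathcal M$ equals $|\Omega^{\mathcal M}([n])|/|\mathrm{Aut}^*(\mathcal M)|$.
   Context: $\mathcal L$ is a finite language of relation and/or constant symbols, of arity $r$ (largest arity of a relation symbol, $0$ if none). A hereditary $\mathcal L$-property is a class of $\mathcal L$-structures closed under isomorphism and substructures; $\mathcal H_n$ is the set of its members with universe $[n]$; it is non-trivial if $\mathcal H_n\neq\emptyset$ for infinitely many $n$. For an $\mathcal L$-structure and $a,b$ in it, $a\sim b$ iff the transposition of $a,b$ (fixing all other elements) is an automorphism; $\mathcal H$ is basic if the number of $\sim$-classes of its members is uniformly bounded. Since $\mathcal M$ has finitely many $\sim$-classes, enumerate them as $A_1,\dots,A_k$ with $|A_1|\le\dots\le|A_k|$; let $t$ be the number of finite classes (so $A_1,\dots,A_t$ are exactly the finite ones) and $K=\max\{r,|A_t|\}$ (with $K=r$ if $t=0$). For a set $X$, $\Omega^{\mathcal M}(X)$ is the set of ordered partitions $(X_1,\dots,X_k)$ of $X$ with $|X_i|=|A_i|$ for $i\le t$ and $|X_i|>K$ for $t<i\le k$. An $\mathcal L$-structure $\mathcal N$ is compatible with $\mathcal M$ if there is $(B_1,\dots,B_k)\in\Omega^{\mathcal M}(N)$ such that for every atomic formula $\tau(x_1,\dots,x_s)$ and all tuples $(b_1,\dots,b_s)$ of pairwise distinct elements of $N$ and $(a_1,\dots,a_s)$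 of pairwise distinct elements of $M$ with $b_j\in B_i\iff a_j\in A_i$ for all $i,j$, we have $\mathcal N\models\tau(\bar b)$ iff $\mathcal M\models\tau(\bar a)$. $\mathrm{Aut}^*(\mathcal M)$ is the set of permutations $\sigma$ of $[k]$ for which there is an automorphism $f$ of $\mathcal M$ with $f(A_i)=A_{\sigma(i)}$ for all $i\in[k]$. *)

theory Defs
  imports Complex_Main "HOL-Combinatorics.Permutations"
begin

text \<open>A finite language: relation symbols Rels (arities ar), constant symbols Cs.
  Structures have universe a subset of nat (every countable structure is isomorphic to one).\<close>

datatype ('r,'c) struc = Struc (univ: "nat set") (rel: "'r \<Rightarrow> nat list \<Rightarrow> bool") (cst: "'c \<Rightarrow> nat")

definition wf_struc :: "'r set \<Rightarrow> ('r \<Rightarrow> nat) \<Rightarrow> 'c set \<Rightarrow> ('r,'c) struc \<Rightarrow> bool" where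
  "wf_struc Rels ar Cs S \<longleftrightarrow>
     (\<forall>r xs. rel S r xs \<longrightarrow> r \<in> Rels \<and> length xs = ar r \<and> set xs \<subseteq> univ S) \<and>
     (\<forall>c\<in>Cs. cst S c \<in> univ S) \<and> (\<forall>c. c \<notin> Cs \<longrightarrow> cst S c = undefined)"

definition iso_map :: "'r set \<Rightarrow> 'c set \<Rightarrow> ('r,'c) struc \<Rightarrow> ('r,'c) struc \<Rightarrow> (nat \<Rightarrow> nat) \<Rightarrow> bool" where
  "iso_map Rels Cs S S' f \<longleftrightarrow> bij_betw f (univ S) (univ S') \<and>
     (\<forall>r\<in>Rels. \<forall>xs. set xs \<subseteq> univ S \<longrightarrow> rel S' r (map f xs) = rel S r xs) \<and>
     (\<forall>c\<in>Cs. f (cst S c) = cst S' c)"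

definition isomorphic :: "'r set \<Rightarrow> 'c set \<Rightarrow> ('r,'c) struc \<Rightarrow> ('r,'c) struc \<Rightarrow> bool" where
  "isomorphic Rels Cs S S' \<longleftrightarrow> (\<exists>f. iso_map Rels Cs S S' f)"

definition substructure :: "'r set \<Rightarrow> 'c set \<Rightarrow> ('r,'c) struc \<Rightarrow> ('r,'c) struc \<Rightarrow> bool" where
  "substructure Rels Cs S' S \<longleftrightarrow> univ S' \<subseteq> univ S \<and> (\<forall>c\<in>Cs. cst S' c = cst S c) \<and>
     (\<forall>r\<in>Rels. \<forall>xs. rel S' r xs = (rel S r xs \<and> set xs \<subseteq> univ S'))"

definition hereditary :: "'r set \<Rightarrow> ('r \<Rightarrow> nat) \<Rightarrow> 'c set \<Rightarrow> ('r,'c) struc set \<Rightarrow> bool" where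
  "hereditary Rels ar Cs H \<longleftrightarrow> (\<forall>S\<in>H. wf_struc Rels ar Cs S) \<and>
     (\<forall>S\<in>H. \<forall>S'. wf_struc Rels ar Cs S' \<and> isomorphic Rels Cs S S' \<longrightarrow> S' \<in> H) \<and>
     (\<forall>S\<in>H. \<forall>S'. wf_struc Rels ar Cs S' \<and> substructure Rels Cs S' S \<longrightarrow> S' \<in> H)"

definition Hn :: "('r,'c) struc set \<Rightarrow> nat \<Rightarrow> ('r,'c) struc set" where
  "Hn H n = {S \<in> H. univ S = {1..n}}"

definition nontrivial :: "('r,'c) struc set \<Rightarrow> bool" where
  "nontrivial H \<longleftrightarrow> infinite {n. Hn H n \<noteq> {}}"

definition transp_fun :: "nat \<Rightarrow> nat \<Rightarrow> nat \<Rightarrow> nat" where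
  "transp_fun a b = (\<lambda>x. if x = a then b else if x = b then a else x)"

definition sim :: "'r set \<Rightarrow> 'c set \<Rightarrow> ('r,'c) struc \<Rightarrow> nat \<Rightarrow> nat \<Rightarrow> bool" where
  "sim Rels Cs S a b \<longleftrightarrow> a \<in> univ S \<and> b \<in> univ S \<and> iso_map Rels Cs S S (transp_fun a b)"

definition sim_classes :: "'r set \<Rightarrow> 'c set \<Rightarrow> ('r,'c) struc \<Rightarrow> nat set set" where
  "sim_classes Rels Cs S = univ S // {(a,b). sim Rels Cs S a b}"

definition basic :: "'r set \<Rightarrow> 'c set \<Rightarrow> ('r,'c) struc set \<Rightarrow> bool" where
  "basic Rels Cs H \<longleftrightarrow> (\<exists>B::nat. \<forall>S\<in>H. finite (sim_classes Rels Cs S) \<and> card (sim_classes Rels Cs S) \<le> B)"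

definition max_arity :: "'r set \<Rightarrow> ('r \<Rightarrow> nat) \<Rightarrow> nat" where
  "max_arity Rels ar = Max (insert 0 (ar ` Rels))"

text \<open>A (0-based) enumeration A 0, ..., A (k-1) of the classes of M with nondecreasing
  cardinalities (all sets here are countable, so infinite ones have equal cardinality).\<close>
definition class_enum :: "'r set \<Rightarrow> 'c set \<Rightarrow> ('r,'c) struc \<Rightarrow> (nat \<Rightarrow> nat set) \<Rightarrow> nat \<Rightarrow> bool" where
  "class_enum Rels Cs M A k \<longleftrightarrow> bij_betw A {..<k} (sim_classes Rels Cs M) \<and>
     (\<forall>i j. i < j \<and> j < k \<and> finite (A j) \<longrightarrow> finite (A i) \<and> card (A i) \<le> card (A j))"

definition num_fin :: "(nat \<Rightarrow> nat set) \<Rightarrow> nat \<Rightarrow> nat" where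
  "num_fin A k = card {i. i < k \<and> finite (A i)}"

definition Kval :: "'r set \<Rightarrow> ('r \<Rightarrow> nat) \<Rightarrow> (nat \<Rightarrow> nat set) \<Rightarrow> nat \<Rightarrow> nat" where
  "Kval Rels ar A k = (if num_fin A k = 0 then max_arity Rels ar
                       else max (max_arity Rels ar) (card (A (num_fin A k - 1))))"

text \<open>Ordered partitions (X 0, ..., X (k-1)) of X; entries beyond k are fixed to {}.\<close>
definition Omega :: "'r set \<Rightarrow> ('r \<Rightarrow> nat) \<Rightarrow> (nat \<Rightarrow> nat set) \<Rightarrow> nat \<Rightarrow> nat set \<Rightarrow> (nat \<Rightarrow> nat set) set" where
  "Omega Rels ar A k X = {Xs.
     (\<forall>i<k. Xs i \<subseteq> X) \<and> (\<forall>i<k. \<forall>j<k. i \<noteq> j \<longrightarrow> Xs i \<inter> Xs j = {}) \<and> (\<Union>i<k. Xs i) = X \<and>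
     (\<forall>i<num_fin A k. card (Xs i) = card (A i)) \<and>
     (\<forall>i. num_fin A k \<le> i \<and> i < k \<longrightarrow> card (Xs i) > Kval Rels ar A k) \<and>
     (\<forall>i\<ge>k. Xs i = {})}"

datatype 'c trm = V nat | C 'c
datatype ('r,'c) atm = R 'r "'c trm list" | Eq "'c trm" "'c trm"

fun tval :: "('r,'c) struc \<Rightarrow> nat list \<Rightarrow> 'c trm \<Rightarrow> nat" where
  "tval S bs (V i) = bs ! i"
| "tval S bs (C c) = cst S c"

fun holds :: "('r,'c) struc \<Rightarrow> ('r,'c) atm \<Rightarrow> nat list \<Rightarrow> bool" where
  "holds S (R r ts) bs = rel S r (map (tval S bs) ts)"
| "holds S (Eq t u) bs = (tval S bs t = tval S bs u)"

fun trm_ok :: "'c set \<Rightarrow> nat \<Rightarrow> 'c trm \<Rightarrow> bool" where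
  "trm_ok Cs s (V i) = (i < s)"
| "trm_ok Cs s (C c) = (c \<in> Cs)"

fun atom_ok :: "'r set \<Rightarrow> ('r \<Rightarrow> nat) \<Rightarrow> 'c set \<Rightarrow> nat \<Rightarrow> ('r,'c) atm \<Rightarrow> bool" where
  "atom_ok Rels ar Cs s (R r ts) = (r \<in> Rels \<and> length ts = ar r \<and> (\<forall>t\<in>set ts. trm_ok Cs s t))"
| "atom_ok Rels ar Cs s (Eq t u) = (trm_ok Cs s t \<and> trm_ok Cs s u)"

definition compatible :: "'r set \<Rightarrow> ('r \<Rightarrow> nat) \<Rightarrow> 'c set \<Rightarrow> ('r,'c) struc \<Rightarrow> (nat \<Rightarrow> nat set) \<Rightarrow> nat \<Rightarrow> ('r,'c) struc \<Rightarrow> bool" where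
  "compatible Rels ar Cs M A k N \<longleftrightarrow> (\<exists>Bs\<in>Omega Rels ar A k (univ N).
     \<forall>\<tau> bs as. atom_ok Rels ar Cs (length bs) \<tau> \<and> length as = length bs \<and>
        distinct bs \<and> distinct as \<and> set bs \<subseteq> univ N \<and> set as \<subseteq> univ M \<and>
        (\<forall>i<k. \<forall>j<length bs. (bs ! j \<in> Bs i) = (as ! j \<in> A i))
        \<longrightarrow> (holds N \<tau> bs = holds M \<tau> as))"

definition AutStar :: "'r set \<Rightarrow> 'c set \<Rightarrow> ('r,'c) struc \<Rightarrow> (nat \<Rightarrow> nat set) \<Rightarrow> nat \<Rightarrow> (nat \<Rightarrow> nat) set" where
  "AutStar Rels Cs M A k = {\<sigma>. \<sigma> permutes {..<k} \<and>
     (\<exists>f. iso_map Rels Cs M M f \<and> (\<forall>i<k. f ` A i = A (\<sigma> i)))}"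

end

theory Submission
  imports Defs "HOL-Library.Disjoint_Sets" "HOL-Library.Infinite_Set"
begin

text \<open>Elements of one \<open>\<sim>\<close>-class of M can be permuted freely, so which atomic formulas a tuple
  of distinct elements satisfies depends only on the classes its entries lie in. Hence for a
  partition (B_1, ..., B_k) of [n] there is exactly one structure on [n] compatible with M via it:
  the pullback of M along any injection sending each B_i into A_i, which lies in H because H is
  hereditary. Two partitions give the same structure iff they differ by an element of Aut*(M).
  For the nontrivial direction, the size bound |B_i| > K on blocks of infinite classes leaves
  enough room to realise every tuple of at most K+1 elements of M inside [n]. If two elements of
  a block of one partition lay in different blocks B_j, B_j' of the other, swapping them would
  preserve all atoms of the structure and thereby make elements of A_j and A_j' similar;
  so the blocks agree up to a permutation of indices, and gluing bijections A_i \<rightarrow> A_\<sigma>(i) yields an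
  automorphism of M realising it. Counting the fibres of the pullback map gives
  |\<Omega>([n])| = (number of compatible structures) \<cdot> |Aut*(M)| for every n.\<close>

section \<open>Transpositions, glued injections and fibres\<close>

lemma transp_fun_simps [simp]:
  "transp_fun a b a = b" "transp_fun a b b = a"
  "x \<noteq> a \<Longrightarrow> x \<noteq> b \<Longrightarrow> transp_fun a b x = x"
  by (auto simp: transp_fun_def)

lemma transp_fun_transp_fun [simp]: "transp_fun a b (transp_fun a b x) = x"
  by (auto simp: transp_fun_def)

lemma transp_fun_commute: "transp_fun a b = transp_fun b a"
  by (auto simp: transp_fun_def fun_eq_iff)

lemma inj_transp_fun: "inj (transp_fun a b)"
  by (metis injI transp_fun_transp_fun)

lemma bij_betw_transp_fun: "a \<in> S \<Longrightarrow> b \<in> S \<Longrightarrow> bij_betw (transp_fun a b) S S"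
  by (rule bij_betwI[where g = "transp_fun a b"]) (auto simp: transp_fun_def)

lemma transp_fun_mem_iff:
  assumes "disjoint_family_on P I" "i \<in> I" "l \<in> I" "a \<in> P i" "b \<in> P i"
  shows "transp_fun a b x \<in> P l \<longleftrightarrow> x \<in> P l"
  using assms disjoint_family_onD[OF assms(1)] unfolding transp_fun_def
  by (cases "l = i") auto

lemma inj_on_glue:
  assumes P: "disjoint_family_on P I" and Q: "disjoint_family_on Q I"
    and F: "\<And>l. l \<in> I \<Longrightarrow> inj_on (F l) (P l) \<and> F l ` P l \<subseteq> Q l"
  obtains G where "\<And>l x. l \<in> I \<Longrightarrow> x \<in> P l \<Longrightarrow> G x = F l x" and "inj_on G (\<Union>l\<in>I. P l)"
proof -
  define G where "G x = F (SOME l. l \<in> I \<and> x \<in> P l) x" for x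
  have G: "G x = F l x" if "l \<in> I" "x \<in> P l" for l x
  proof -
    have "(SOME l. l \<in> I \<and> x \<in> P l) = l"
    proof (rule some_equality)
      show "l' = l" if "l' \<in> I \<and> x \<in> P l'" for l'
        using that \<open>l \<in> I\<close> \<open>x \<in> P l\<close> disjoint_family_onD[OF P, of l' l] by blast
    qed (use that in simp)
    then show ?thesis by (simp add: G_def)
  qed
  have "inj_on G (\<Union>l\<in>I. P l)"
  proof (rule inj_onI)
    fix x y assume "x \<in> (\<Union>l\<in>I. P l)" "y \<in> (\<Union>l\<in>I. P l)" and eq: "G x = G y"
    then obtain l l' where l: "l \<in> I" "x \<in> P l" and l': "l' \<in> I" "y \<in> P l'" by blast
    have eqF: "F l x = F l' y" using eq G[OF l] G[OF l'] by simp
    have "F l x \<in> Q l" "F l' y \<in> Q l'" using F l l' by auto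
    then have "F l x \<in> Q l \<inter> Q l'" using eqF by simp
    then have "l = l'" using disjoint_family_onD[OF Q l(1) l'(1)] by auto
    then show "x = y" using inj_onD[of "F l" "P l" x y] F[OF l(1)] l(2) l'(2) eqF by simp
  qed
  with G show ?thesis by (rule that)
qed

lemma bij_betw_glue:
  assumes P: "disjoint_family_on P I" and Q: "disjoint_family_on Q I"
    and F: "\<And>l. l \<in> I \<Longrightarrow> bij_betw (F l) (P l) (Q l)"
  obtains G where "\<And>l x. l \<in> I \<Longrightarrow> x \<in> P l \<Longrightarrow> G x = F l x"
    and "bij_betw G (\<Union>l\<in>I. P l) (\<Union>l\<in>I. Q l)"
proof -
  obtain G where G: "\<And>l x. l \<in> I \<Longrightarrow> x \<in> P l \<Longrightarrow> G x = F l x" and inj: "inj_on G (\<Union>l\<in>I. P l)"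
    using inj_on_glue[OF P Q, of F] F by (auto simp: bij_betw_def)
  have "G ` (\<Union>l\<in>I. P l) = (\<Union>l\<in>I. F l ` P l)"
    using G by (auto simp: image_UN intro!: SUP_cong image_cong)
  also have "\<dots> = (\<Union>l\<in>I. Q l)" using F by (simp add: bij_betw_def)
  finally have "bij_betw G (\<Union>l\<in>I. P l) (\<Union>l\<in>I. Q l)" using inj by (simp add: bij_betw_def)
  with G show ?thesis by (rule that)
qed

lemma maps_into_family_mem_iff:
  assumes Q: "disjoint_family_on Q I" and h: "\<And>l. l \<in> I \<Longrightarrow> x \<in> P l \<Longrightarrow> h x \<in> Q l"
    and "l' \<in> I" "x \<in> P l'" "l \<in> I"
  shows "h x \<in> Q l \<longleftrightarrow> x \<in> P l"
proof
  assume "h x \<in> Q l"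
  moreover have "h x \<in> Q l'" using h assms(3,4) .
  ultimately have "l = l'" using disjoint_family_onD[OF Q \<open>l \<in> I\<close> \<open>l' \<in> I\<close>] by blast
  then show "x \<in> P l" using assms(4) by simp
qed (use h assms(5) in blast)

lemma list_eq_map_nth:
  "set xs \<subseteq> set ds \<Longrightarrow> \<exists>idx. xs = map (nth ds) idx \<and> (\<forall>i\<in>set idx. i < length ds)"
proof (induction xs)
  case (Cons x xs)
  then obtain idx where "xs = map (nth ds) idx" "\<forall>i\<in>set idx. i < length ds" by auto
  moreover obtain i where "i < length ds" "ds ! i = x" using Cons.prems by (auto simp: in_set_conv_nth)
  ultimately show ?case by (intro exI[of _ "i # idx"]) auto
qed simp

lemma card_insert_insert_Int_le:
  assumes "finite S" "x \<notin> B" "x \<in> S \<or> y \<in> S"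
  shows "card (insert x (insert y S) \<inter> B) \<le> card S"
proof -
  have "card (insert x (insert y S) \<inter> B) \<le> card (insert y S - {x})"
    by (rule card_mono) (use assms in auto)
  also have "\<dots> \<le> card S"
  proof (cases "x \<in> S")
    case True
    have "card (insert y S - {x}) \<le> card (insert y (S - {x}))" by (rule card_mono) (use assms in auto)
    also have "\<dots> \<le> Suc (card (S - {x}))" by (simp add: card_insert_le_m1 assms)
    also have "\<dots> = card S" by (rule card_Suc_Diff1[OF assms(1) True])
    finally show ?thesis .
  next
    case False
    then show ?thesis using assms by (simp add: insert_absorb)
  qed
  finally show ?thesis .
qed

lemma transp_fun_inj_on_commute:
  assumes "inj_on h D" "a \<in> D" "a' \<in> D" "x \<in> D"
  shows "transp_fun (h a) (h a') (h x) = h (transp_fun a a' x)"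
proof (cases "x = a \<or> x = a'")
  case False
  then have "h x \<noteq> h a" "h x \<noteq> h a'" using assms inj_on_eq_iff by metis+
  then show ?thesis using False by simp
qed auto

lemma card_eq_card_image_mult:
  assumes "finite S" "\<And>y. y \<in> f ` S \<Longrightarrow> card {x\<in>S. f x = y} = m"
  shows "card S = card (f ` S) * m"
proof -
  have "card S = card (\<Union>y\<in>f ` S. {x\<in>S. f x = y})" by (rule arg_cong[of _ _ card]) auto
  also have "\<dots> = (\<Sum>y\<in>f ` S. card {x\<in>S. f x = y})"
    by (rule card_UN_disjoint) (use assms(1) in auto)
  finally show ?thesis using assms(2) by simp
qed

lemma tval_in_univ:
  "wf_struc Rels ar Cs S \<Longrightarrow> trm_ok Cs (length xs) t \<Longrightarrow> set xs \<subseteq> univ S \<Longrightarrow> tval S xs t \<in> univ S"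
  by (cases t) (auto simp: wf_struc_def)

lemma holds_R_map_V: "holds S (R r (map V idx)) ds = rel S r (map (nth ds) idx)"
  by (simp add: comp_def)

section \<open>The similarity classes of M\<close>

locale class_enumeration =
  fixes Rels :: "'r set" and ar :: "'r \<Rightarrow> nat" and Cs :: "'c set"
    and M :: "('r,'c) struc" and A :: "nat \<Rightarrow> nat set" and k :: nat
  assumes finite_Rels: "finite Rels" and wf_M: "wf_struc Rels ar Cs M"
    and class_enum: "class_enum Rels Cs M A k"
begin

abbreviation aut :: "(nat \<Rightarrow> nat) \<Rightarrow> bool" where
  "aut f \<equiv> iso_map Rels Cs M M f"

abbreviation sim_M :: "nat \<Rightarrow> nat \<Rightarrow> bool" where
  "sim_M \<equiv> sim Rels Cs M"

abbreviation nfin :: nat where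
  "nfin \<equiv> num_fin A k"

abbreviation K :: nat where
  "K \<equiv> Kval Rels ar A k"

lemma aut_id: "aut id"
  by (simp add: iso_map_def)

lemma aut_bij_betw: "aut f \<Longrightarrow> bij_betw f (univ M) (univ M)"
  by (simp add: iso_map_def)

lemma aut_comp:
  assumes f: "aut f" and g: "aut g"
  shows "aut (g \<circ> f)"
proof -
  have "rel M r (map (g \<circ> f) xs) = rel M r xs" if "r \<in> Rels" "set xs \<subseteq> univ M" for r xs
  proof -
    have "set (map f xs) \<subseteq> univ M" using that(2) aut_bij_betw[OF f] by (auto simp: bij_betw_def)
    then have "rel M r (map g (map f xs)) = rel M r (map f xs)"
      using g that(1) unfolding iso_map_def by blast
    also have "\<dots> = rel M r xs" using f that by (simp add: iso_map_def)
    finally show ?thesis by (simp add: map_map)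
  qed
  moreover have "bij_betw (g \<circ> f) (univ M) (univ M)"
    using aut_bij_betw[OF f] aut_bij_betw[OF g] by (rule bij_betw_trans)
  moreover have "(g \<circ> f) (cst M c) = cst M c" if "c \<in> Cs" for c
    using f g that by (simp add: iso_map_def)
  ultimately show ?thesis unfolding iso_map_def by blast
qed

lemma sim_refl: "x \<in> univ M \<Longrightarrow> sim_M x x"
proof -
  have "transp_fun x x = id" by (auto simp: transp_fun_def)
  then show "x \<in> univ M \<Longrightarrow> sim_M x x" using aut_id by (simp add: sim_def)
qed

lemma sim_sym: "sim_M a b \<Longrightarrow> sim_M b a"
  by (auto simp: sim_def transp_fun_commute)

lemma sim_trans:
  assumes ab: "sim_M a b" and bc: "sim_M b c"
  shows "sim_M a c"
proof (cases "a = c \<or> a = b \<or> b = c")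
  case True
  then show ?thesis
  proof (elim disjE)
    assume "a = c"
    then show ?thesis using ab sim_refl by (simp add: sim_def)
  qed (use ab bc in simp_all)
next
  case False
  have "transp_fun a c = transp_fun a b \<circ> (transp_fun b c \<circ> transp_fun a b)"
    using False by (auto simp: transp_fun_def fun_eq_iff)
  moreover have "aut (transp_fun a b)" "aut (transp_fun b c)" using ab bc by (auto simp: sim_def)
  ultimately have "aut (transp_fun a c)" by (simp add: aut_comp)
  then show ?thesis using ab bc by (simp add: sim_def)
qed

lemma equiv_sim: "equiv (univ M) {(a, b). sim_M a b}"
proof (rule equivI)
  show "{(a, b). sim_M a b} \<subseteq> univ M \<times> univ M" by (auto simp: sim_def)
  show "refl_on (univ M) {(a, b). sim_M a b}" by (auto simp: refl_on_def intro: sim_refl)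
  show "sym {(a, b). sim_M a b}" by (auto simp: sym_def intro: sim_sym)
  show "trans {(a, b). sim_M a b}" by (auto simp: trans_def intro: sim_trans)
qed

lemma A_in_quotient: "i < k \<Longrightarrow> A i \<in> univ M // {(a, b). sim_M a b}"
  using class_enum unfolding class_enum_def sim_classes_def by (auto simp: bij_betw_def)

lemma A_subset: "i < k \<Longrightarrow> A i \<subseteq> univ M"
  using A_in_quotient equiv_sim by (metis Union_quotient Union_upper)

lemma A_nonempty: "i < k \<Longrightarrow> A i \<noteq> {}"
  using A_in_quotient equiv_sim in_quotient_imp_non_empty by blast

lemma A_sim: "i < k \<Longrightarrow> x \<in> A i \<Longrightarrow> y \<in> A i \<Longrightarrow> sim_M x y"
  using A_in_quotient equiv_sim quotient_eq_iff by fastforce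

lemma A_sim_closed: "i < k \<Longrightarrow> x \<in> A i \<Longrightarrow> sim_M x y \<Longrightarrow> y \<in> A i"
  using A_in_quotient[of i] equiv_sim in_quotient_imp_closed by fastforce

lemma disjoint_family_A: "disjoint_family_on A {..<k}"
unfolding disjoint_family_on_def
proof (intro ballI impI)
  fix i j assume ij: "i \<in> {..<k}" "j \<in> {..<k}" "i \<noteq> j"
  moreover have "inj_on A {..<k}"
    using class_enum unfolding class_enum_def by (simp add: bij_betw_def)
  ultimately have "A i \<noteq> A j" by (auto dest: inj_onD)
  then show "A i \<inter> A j = {}"
    using quotient_disj[OF equiv_sim A_in_quotient[of i] A_in_quotient[of j]] ij by auto
qed

lemma A_cover:
  assumes "x \<in> univ M"
  obtains i where "i < k" "x \<in> A i"
proof -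
  obtain X where "X \<in> univ M // {(a, b). sim_M a b}" "x \<in> X"
    using assms Union_quotient[OF equiv_sim] by blast
  moreover have "A ` {..<k} = univ M // {(a, b). sim_M a b}"
    using class_enum unfolding class_enum_def sim_classes_def by (simp add: bij_betw_def)
  ultimately show ?thesis using that by auto
qed

lemma UN_A: "(\<Union>i<k. A i) = univ M"
  using A_subset A_cover by blast

lemma A_unique: "i < k \<Longrightarrow> j < k \<Longrightarrow> x \<in> A i \<Longrightarrow> x \<in> A j \<Longrightarrow> i = j"
  using disjoint_family_onD[OF disjoint_family_A] by blast

lemma holds_aut:
  assumes f: "aut f" and ok: "atom_ok Rels ar Cs (length xs) \<tau>" and xs: "set xs \<subseteq> univ M"
  shows "holds M \<tau> (map f xs) = holds M \<tau> xs"
proof -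
  have tval: "tval M (map f xs) t = f (tval M xs t)" if "trm_ok Cs (length xs) t" for t
    using f that by (cases t) (auto simp: iso_map_def)
  have in_univ: "tval M xs t \<in> univ M" if "trm_ok Cs (length xs) t" for t
    using tval_in_univ[OF wf_M that xs] .
  show ?thesis
  proof (cases \<tau>)
    case (R r ts)
    then have eq: "map (tval M (map f xs)) ts = map f (map (tval M xs) ts)"
      and "set (map (tval M xs) ts) \<subseteq> univ M" and "r \<in> Rels"
      using ok tval in_univ by auto
    then have "rel M r (map f (map (tval M xs) ts)) = rel M r (map (tval M xs) ts)"
      using f unfolding iso_map_def by blast
    then show ?thesis by (simp only: R holds.simps eq)
  next
    case (Eq t u)
    moreover have "inj_on f (univ M)" using aut_bij_betw[OF f] by (simp add: bij_betw_def)
    ultimately show ?thesis using ok tval in_univ by (auto simp: inj_on_eq_iff)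
  qed
qed

text \<open>Built by composing transpositions, one coordinate at a time.\<close>
lemma simultaneous_sim_aut:
  "list_all2 sim_M xs ys \<Longrightarrow> distinct xs \<Longrightarrow> distinct ys \<Longrightarrow>
   \<exists>f. aut f \<and> map f xs = ys \<and> (\<forall>x\<in>univ M. sim_M x (f x))"
proof (induction xs arbitrary: ys)
  case Nil
  then show ?case using aut_id sim_refl by auto
next
  case (Cons x xs ys0)
  then obtain y ys where ys0: "ys0 = y # ys" and xy: "sim_M x y" and rest: "list_all2 sim_M xs ys"
    by (cases ys0) auto
  from Cons.IH[OF rest] Cons.prems ys0 obtain f
    where f: "aut f" "map f xs = ys" "\<forall>x\<in>univ M. sim_M x (f x)" by auto
  have xM: "x \<in> univ M" using xy by (simp add: sim_def)
  have fx: "sim_M (f x) y" using f(3) xM xy sim_sym sim_trans by blast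
  define t where "t = transp_fun (f x) y"
  have t: "aut t" using fx by (simp add: sim_def t_def)
  have inj_f: "inj_on f (univ M)" using aut_bij_betw[OF f(1)] by (simp add: bij_betw_def)
  have xs_M: "set xs \<subseteq> univ M" using rest by (induction rule: list_all2_induct) (auto simp: sim_def)
  have "f x \<notin> set ys"
  proof
    assume "f x \<in> set ys"
    then obtain z where z: "z \<in> set xs" "f z = f x" using f(2) by auto
    then have "z = x" using inj_onD[OF inj_f] xs_M xM by blast
    then show False using z(1) Cons.prems(2) by simp
  qed
  moreover have "y \<notin> set ys" using Cons.prems ys0 by auto
  ultimately have "map t ys = ys" by (intro map_idI) (metis t_def transp_fun_simps(3))
  then have "map (t \<circ> f) (x # xs) = y # ys" using f(2) by (simp add: t_def flip: map_map)
  moreover have "sim_M z ((t \<circ> f) z)" if z: "z \<in> univ M" for z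
  proof (cases "f z = f x \<or> f z = y")
    case True
    then show ?thesis
    proof
      assume "f z = f x"
      then have "z = x" using inj_onD[OF inj_f] z xM by blast
      then show ?thesis using xy by (simp add: t_def)
    next
      assume fz: "f z = y"
      then have "(t \<circ> f) z = f x" by (simp add: t_def)
      moreover have "sim_M z y" using f(3) z fz by metis
      ultimately show ?thesis using fx sim_sym sim_trans by metis
    qed
  next
    case False
    then show ?thesis using f(3) z by (simp add: t_def)
  qed
  ultimately show ?case using aut_comp[OF f(1) t] unfolding ys0 by (intro exI[of _ "t \<circ> f"]) blast
qed

lemma holds_eq_if_same_classes:
  assumes "distinct xs" "distinct ys" "length xs = length ys"
    and "set xs \<subseteq> univ M" "set ys \<subseteq> univ M"
    and same: "\<And>i j. i < k \<Longrightarrow> j < length xs \<Longrightarrow> xs ! j \<in> A i \<longleftrightarrow> ys ! j \<in> A i"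
    and ok: "atom_ok Rels ar Cs (length xs) \<tau>"
  shows "holds M \<tau> xs = holds M \<tau> ys"
proof -
  have "list_all2 sim_M xs ys"
  proof (rule list_all2_all_nthI)
    fix j assume j: "j < length xs"
    then have "xs ! j \<in> univ M" using assms(4) by auto
    then obtain i where "i < k" "xs ! j \<in> A i" by (rule A_cover)
    then show "sim_M (xs ! j) (ys ! j)" using same j A_sim by blast
  qed fact
  then obtain f where "aut f" "map f xs = ys" using simultaneous_sim_aut assms by blast
  then show ?thesis using holds_aut[OF _ ok assms(4)] by metis
qed

lemma finite_A_iff:
  assumes "i < k"
  shows "finite (A i) \<longleftrightarrow> i < nfin"
proof -
  define S where "S = {i. i < k \<and> finite (A i)}"
  have S: "finite S" "nfin = card S" unfolding S_def num_fin_def by auto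
  have down: "finite (A j) \<Longrightarrow> i < j \<Longrightarrow> j < k \<Longrightarrow> finite (A i)" for i j
    using class_enum unfolding class_enum_def by blast
  show ?thesis
  proof
    assume "finite (A i)"
    then have "{..i} \<subseteq> S" using assms down unfolding S_def by (auto simp: le_less)
    then show "i < nfin" using S card_mono[of S "{..i}"] by simp
  next
    assume "i < nfin"
    show "finite (A i)"
    proof (rule ccontr)
      assume "infinite (A i)"
      then have "S \<subseteq> {..<i}" using assms down unfolding S_def by (auto simp: not_less le_less)
      then show False using S \<open>i < nfin\<close> card_mono[of "{..<i}" S] by simp
    qed
  qed
qed

lemma nfin_le_k: "nfin \<le> k"
  unfolding num_fin_def using card_mono[of "{..<k}" "{i. i < k \<and> finite (A i)}"] by auto

lemma card_A_le_K:
  assumes "i < nfin"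
  shows "card (A i) \<le> K"
proof -
  have last: "nfin - 1 < k" "finite (A (nfin - 1))" using assms nfin_le_k finite_A_iff by auto
  have "card (A i) \<le> card (A (nfin - 1))"
    using class_enum last assms unfolding class_enum_def
    by (cases "i < nfin - 1") (auto simp: not_less intro: eq_refl[OF arg_cong[of _ _ "\<lambda>i. card (A i)"]])
  then show ?thesis using assms unfolding Kval_def by auto
qed

lemma arity_le_K: "r \<in> Rels \<Longrightarrow> ar r \<le> K"
  unfolding Kval_def max_arity_def using finite_Rels by (auto intro: Max_ge le_trans[OF _ max.cobounded1])

text \<open>Relation atoms need at most K variables, the atom c = x_0 only one.\<close>
lemma aut_if_preserves_short_atoms:
  assumes bij: "bij_betw f (univ M) (univ M)"
    and inv: "\<And>\<tau> ds. distinct ds \<Longrightarrow> set ds \<subseteq> univ M \<Longrightarrow> length ds \<le> K + 1 \<Longrightarrow>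
                 atom_ok Rels ar Cs (length ds) \<tau> \<Longrightarrow> holds M \<tau> ds = holds M \<tau> (map f ds)"
  shows "aut f"
  unfolding iso_map_def
proof (intro conjI ballI allI impI)
  fix c assume c: "c \<in> Cs"
  have "cst M c \<in> univ M" using wf_M c by (simp add: wf_struc_def)
  then have "holds M (Eq (C c) (V 0)) [cst M c] = holds M (Eq (C c) (V 0)) (map f [cst M c])"
    using c by (intro inv) auto
  then show "f (cst M c) = cst M c" by simp
next
  fix r xs assume r: "r \<in> Rels" and xs: "set xs \<subseteq> univ M"
  show "rel M r (map f xs) = rel M r xs"
  proof (cases "length xs = ar r")
    case False
    then show ?thesis using wf_M unfolding wf_struc_def by (metis length_map)
  next
    case True
    define ds where "ds = remdups xs"
    obtain idx where idx: "xs = map (nth ds) idx" "\<forall>i\<in>set idx. i < length ds"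
      using list_eq_map_nth[of xs ds] ds_def by auto
    have "length ds \<le> K + 1"
      using length_remdups_leq[of xs] True arity_le_K[OF r] unfolding ds_def by simp
    moreover have "atom_ok Rels ar Cs (length ds) (R r (map V idx))" using r True idx by auto
    ultimately have "holds M (R r (map V idx)) ds = holds M (R r (map V idx)) (map f ds)"
      using xs ds_def by (intro inv) auto
    moreover have "map (nth (map f ds)) idx = map f xs" using idx by auto
    ultimately show ?thesis using idx(1) by (simp only: holds_R_map_V)
  qed
qed (use bij in simp)

lemma cst_class_singleton:
  assumes c: "c \<in> Cs" and l: "l < k" "cst M c \<in> A l"
  shows "A l = {cst M c}"
proof -
  have "y = cst M c" if y: "y \<in> A l" for y
  proof -
    have "aut (transp_fun (cst M c) y)" using A_sim l y by (simp add: sim_def)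
    then have "transp_fun (cst M c) y (cst M c) = cst M c" using c unfolding iso_map_def by blast
    then show ?thesis by simp
  qed
  then show ?thesis using l by blast
qed

section \<open>Ordered partitions and embeddings of short tuples\<close>

lemma OmegaD:
  assumes "Xs \<in> Omega Rels ar A k X"
  shows "\<And>i. i < k \<Longrightarrow> Xs i \<subseteq> X"
    and "disjoint_family_on Xs {..<k}"
    and "(\<Union>i<k. Xs i) = X"
    and "\<And>i. i < nfin \<Longrightarrow> card (Xs i) = card (A i)"
    and "\<And>i. nfin \<le> i \<Longrightarrow> i < k \<Longrightarrow> K < card (Xs i)"
    and "\<And>i. k \<le> i \<Longrightarrow> Xs i = {}"
  using assms unfolding Omega_def disjoint_family_on_def by auto

lemma OmegaI:
  assumes "\<And>i. i < k \<Longrightarrow> Xs i \<subseteq> X"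
    and "disjoint_family_on Xs {..<k}"
    and "(\<Union>i<k. Xs i) = X"
    and "\<And>i. i < nfin \<Longrightarrow> card (Xs i) = card (A i)"
    and "\<And>i. nfin \<le> i \<Longrightarrow> i < k \<Longrightarrow> K < card (Xs i)"
    and "\<And>i. k \<le> i \<Longrightarrow> Xs i = {}"
  shows "Xs \<in> Omega Rels ar A k X"
  using assms unfolding Omega_def disjoint_family_on_def by auto

lemma Omega_cover:
  assumes "Xs \<in> Omega Rels ar A k X" "x \<in> X"
  obtains i where "i < k" "x \<in> Xs i"
  using OmegaD(3)[OF assms(1)] assms(2) by blast

lemma Omega_nonempty:
  assumes "Xs \<in> Omega Rels ar A k X" "i < k"
  shows "Xs i \<noteq> {}"
proof (cases "i < nfin")
  case True
  then have "card (A i) > 0" using finite_A_iff A_nonempty assms(2) by (simp add: card_gt_0_iff)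
  then show ?thesis using OmegaD(4)[OF assms(1) True] by auto
next
  case False
  then have "K < card (Xs i)" using OmegaD(5)[OF assms(1)] assms(2) by simp
  then show ?thesis by auto
qed

lemma Omega_card_le_K_iff:
  assumes "Xs \<in> Omega Rels ar A k X" "i < k"
  shows "card (Xs i) \<le> K \<longleftrightarrow> i < nfin"
proof (cases "i < nfin")
  case False
  then have "K < card (Xs i)" using OmegaD(5)[OF assms(1)] assms(2) by simp
  then show ?thesis using False by simp
qed (use OmegaD(4)[OF assms(1)] card_A_le_K in simp)

lemma finite_Omega: "finite X \<Longrightarrow> finite (Omega Rels ar A k X)"
proof -
  assume "finite X"
  have "Omega Rels ar A k X \<subseteq> {Xs. \<forall>i. (i \<in> {..<k} \<longrightarrow> Xs i \<in> Pow X) \<and> (i \<notin> {..<k} \<longrightarrow> Xs i = {})}"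
  proof
    fix Xs assume "Xs \<in> Omega Rels ar A k X"
    then show "Xs \<in> {Xs. \<forall>i. (i \<in> {..<k} \<longrightarrow> Xs i \<in> Pow X) \<and> (i \<notin> {..<k} \<longrightarrow> Xs i = {})}"
      using OmegaD(1,6) by auto
  qed
  moreover have "finite {Xs. \<forall>i. (i \<in> {..<k} \<longrightarrow> Xs i \<in> Pow X) \<and> (i \<notin> {..<k} \<longrightarrow> Xs i = {})}"
    by (rule finite_set_of_finite_funs) (use \<open>finite X\<close> in auto)
  ultimately show ?thesis by (rule finite_subset)
qed

text \<open>The bound K < |B_l| for infinite classes leaves room for K+1 elements of each of them.\<close>
lemma exists_inj_into_blocks:
  assumes Bs: "Bs \<in> Omega Rels ar A k X" and "finite X" and D: "finite D" "D \<subseteq> univ M"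
    and cap: "\<And>l. nfin \<le> l \<Longrightarrow> l < k \<Longrightarrow> card (D \<inter> A l) \<le> K + 1"
  obtains h where "inj_on h D" and "\<And>x l. x \<in> D \<Longrightarrow> l < k \<Longrightarrow> x \<in> A l \<Longrightarrow> h x \<in> Bs l"
proof -
  have "\<exists>F. F ` (D \<inter> A l) \<subseteq> Bs l \<and> inj_on F (D \<inter> A l)" if l: "l < k" for l
  proof (rule card_le_inj)
    show "finite (Bs l)" using OmegaD(1)[OF Bs l] \<open>finite X\<close> finite_subset by blast
    show "card (D \<inter> A l) \<le> card (Bs l)"
    proof (cases "l < nfin")
      case True
      then have "card (D \<inter> A l) \<le> card (A l)" using finite_A_iff l by (simp add: card_mono)
      then show ?thesis using OmegaD(4)[OF Bs True] by simp
    next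
      case False
      then have "card (D \<inter> A l) \<le> K + 1" "K < card (Bs l)" using cap OmegaD(5)[OF Bs] l by simp_all
      then show ?thesis by simp
    qed
  qed (use D in auto)
  then obtain F where F: "\<And>l. l \<in> {..<k} \<Longrightarrow> inj_on (F l) (D \<inter> A l) \<and> F l ` (D \<inter> A l) \<subseteq> Bs l"
    by (metis lessThan_iff)
  have "disjoint_family_on (\<lambda>l. D \<inter> A l) {..<k}"
    using disjoint_family_A by (auto simp: disjoint_family_on_def)
  then obtain G where G: "\<And>l x. l \<in> {..<k} \<Longrightarrow> x \<in> D \<inter> A l \<Longrightarrow> G x = F l x"
    and inj: "inj_on G (\<Union>l<k. D \<inter> A l)"
    using inj_on_glue[OF _ OmegaD(2)[OF Bs], of _ F] F by blast
  show ?thesis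
  proof (rule that)
    have "(\<Union>l<k. D \<inter> A l) = D" using D UN_A by blast
    then show "inj_on G D" using inj by simp
  next
    fix x l assume "x \<in> D" "l < k" "x \<in> A l"
    then have "G x = F l x" "F l x \<in> Bs l" using G F[of l] by auto
    then show "G x \<in> Bs l" by simp
  qed
qed

lemma exists_inj_into_classes:
  assumes Bs: "Bs \<in> Omega Rels ar A k X" and "finite X"
  obtains g where "inj_on g X" and "\<And>x l. x \<in> X \<Longrightarrow> l < k \<Longrightarrow> x \<in> Bs l \<Longrightarrow> g x \<in> A l"
proof -
  have "\<exists>F. inj_on F (Bs l) \<and> F ` Bs l \<subseteq> A l" if l: "l < k" for l
  proof -
    have fin: "finite (Bs l)" using OmegaD(1)[OF Bs l] \<open>finite X\<close> finite_subset by blast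
    obtain C where "finite C" "card (Bs l) \<le> card C" "C \<subseteq> A l"
    proof (cases "l < nfin")
      case True
      then show ?thesis using that[of "A l"] finite_A_iff l OmegaD(4)[OF Bs True] by simp
    next
      case False
      then show ?thesis using that infinite_arbitrarily_large finite_A_iff l by (metis order_refl)
    qed
    then show ?thesis using card_le_inj[OF fin] by (metis order_trans)
  qed
  then obtain F where F: "\<And>l. l \<in> {..<k} \<Longrightarrow> inj_on (F l) (Bs l) \<and> F l ` Bs l \<subseteq> A l"
    by (metis lessThan_iff)
  obtain G where G: "\<And>l x. l \<in> {..<k} \<Longrightarrow> x \<in> Bs l \<Longrightarrow> G x = F l x"
    and inj: "inj_on G (\<Union>l<k. Bs l)"
    using inj_on_glue[OF OmegaD(2)[OF Bs] disjoint_family_A, of F] F by blast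
  show ?thesis
  proof (rule that)
    show "inj_on G X" using inj OmegaD(3)[OF Bs] by simp
  next
    fix x l assume "x \<in> X" "l < k" "x \<in> Bs l"
    then have "G x = F l x" "F l x \<in> A l" using G F[of l] by auto
    then show "G x \<in> A l" by simp
  qed
qed

section \<open>Compatible partitions\<close>

definition compatible_via :: "('r,'c) struc \<Rightarrow> (nat \<Rightarrow> nat set) \<Rightarrow> bool" where
  "compatible_via N Bs \<longleftrightarrow> (\<forall>\<tau> bs as. atom_ok Rels ar Cs (length bs) \<tau> \<and> length as = length bs \<and>
        distinct bs \<and> distinct as \<and> set bs \<subseteq> univ N \<and> set as \<subseteq> univ M \<and>
        (\<forall>i<k. \<forall>j<length bs. (bs ! j \<in> Bs i) = (as ! j \<in> A i))
        \<longrightarrow> holds N \<tau> bs = holds M \<tau> as)"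

lemma compatible_iff_compatible_via:
  "compatible Rels ar Cs M A k N \<longleftrightarrow> (\<exists>Bs\<in>Omega Rels ar A k (univ N). compatible_via N Bs)"
  unfolding compatible_def compatible_via_def by simp

lemma compatible_viaD:
  assumes "compatible_via N Bs" "atom_ok Rels ar Cs (length bs) \<tau>" "length as = length bs"
    "distinct bs" "distinct as" "set bs \<subseteq> univ N" "set as \<subseteq> univ M"
    "\<And>i j. i < k \<Longrightarrow> j < length bs \<Longrightarrow> bs ! j \<in> Bs i \<longleftrightarrow> as ! j \<in> A i"
  shows "holds N \<tau> bs = holds M \<tau> as"
  using assms unfolding compatible_via_def by blast

lemma blocks_to_classes_mem_iff:
  assumes Bs: "Bs \<in> Omega Rels ar A k X" and g: "\<forall>x\<in>X. \<forall>l<k. x \<in> Bs l \<longrightarrow> g x \<in> A l"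
    and "x \<in> X"
  shows "\<And>l. l < k \<Longrightarrow> g x \<in> A l \<longleftrightarrow> x \<in> Bs l" and "g x \<in> univ M"
proof -
  obtain l' where l': "l' < k" "x \<in> Bs l'" using Omega_cover[OF Bs \<open>x \<in> X\<close>] .
  show "g x \<in> A l \<longleftrightarrow> x \<in> Bs l" if "l < k" for l
    using maps_into_family_mem_iff[OF disjoint_family_A, of _ Bs g] g \<open>x \<in> X\<close> l' that by blast
  show "g x \<in> univ M" using g \<open>x \<in> X\<close> l' A_subset[OF l'(1)] by blast
qed

lemma classes_to_blocks_mem_iff:
  assumes Bs: "Bs \<in> Omega Rels ar A k X" and h: "\<forall>x\<in>D. \<forall>l<k. x \<in> A l \<longrightarrow> h x \<in> Bs l"
    and "D \<subseteq> univ M" "x \<in> D"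
  shows "\<And>l. l < k \<Longrightarrow> h x \<in> Bs l \<longleftrightarrow> x \<in> A l" and "h x \<in> X"
proof -
  obtain l' where l': "l' < k" "x \<in> A l'" using A_cover assms(3,4) by blast
  show "h x \<in> Bs l \<longleftrightarrow> x \<in> A l" if "l < k" for l
    using maps_into_family_mem_iff[OF OmegaD(2)[OF Bs], of _ A h] h \<open>x \<in> D\<close> l' that by blast
  show "h x \<in> X" using h \<open>x \<in> D\<close> l' OmegaD(1)[OF Bs l'(1)] by blast
qed

lemma holds_map_from_blocks:
  assumes N: "compatible_via N Bs" and Bs: "Bs \<in> Omega Rels ar A k (univ N)"
    and g: "inj_on g (univ N)" "\<And>x l. x \<in> univ N \<Longrightarrow> l < k \<Longrightarrow> x \<in> Bs l \<Longrightarrow> g x \<in> A l"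
    and bs: "distinct bs" "set bs \<subseteq> univ N" and ok: "atom_ok Rels ar Cs (length bs) \<tau>"
  shows "holds N \<tau> bs = holds M \<tau> (map g bs)"
proof (rule compatible_viaD[OF N ok])
  have mem: "g x \<in> univ M" "\<And>l. l < k \<Longrightarrow> g x \<in> A l \<longleftrightarrow> x \<in> Bs l" if "x \<in> univ N" for x
    using blocks_to_classes_mem_iff[OF Bs _ that] g(2) by blast+
  show "distinct (map g bs)" using bs g(1) by (simp add: distinct_map inj_on_subset)
  show "set (map g bs) \<subseteq> univ M" using bs mem(1) by auto
  show "bs ! j \<in> Bs i \<longleftrightarrow> map g bs ! j \<in> A i" if "i < k" "j < length bs" for i j
  proof -
    have "bs ! j \<in> univ N" using that(2) bs(2) nth_mem by blast
    then show ?thesis using mem(2)[OF _ that(1)] that(2) by simp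
  qed
qed (use bs in auto)

lemma holds_map_to_blocks:
  assumes N: "compatible_via N Bs" and Bs: "Bs \<in> Omega Rels ar A k (univ N)"
    and D: "D \<subseteq> univ M" and h: "inj_on h D" "\<And>x l. x \<in> D \<Longrightarrow> l < k \<Longrightarrow> x \<in> A l \<Longrightarrow> h x \<in> Bs l"
    and ds: "distinct ds" "set ds \<subseteq> D" and ok: "atom_ok Rels ar Cs (length ds) \<tau>"
  shows "holds N \<tau> (map h ds) = holds M \<tau> ds"
proof (rule compatible_viaD[OF N])
  have mem: "h x \<in> univ N" "\<And>l. l < k \<Longrightarrow> h x \<in> Bs l \<longleftrightarrow> x \<in> A l" if "x \<in> D" for x
    using classes_to_blocks_mem_iff[OF Bs _ D that] h(2) by blast+
  show "distinct (map h ds)" using ds h(1) by (simp add: distinct_map inj_on_subset)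
  show "set (map h ds) \<subseteq> univ N" using ds mem(1) by auto
  show "map h ds ! j \<in> Bs i \<longleftrightarrow> ds ! j \<in> A i" if "i < k" "j < length (map h ds)" for i j
  proof -
    have "ds ! j \<in> D" using that(2) ds(2) nth_mem by fastforce
    then show ?thesis using mem(2)[OF _ that(1)] that(2) by simp
  qed
qed (use ds D ok in auto)

text \<open>Both tuples are pulled back along injections into M that hit the same classes.\<close>
lemma holds_transp_block:
  assumes N: "compatible_via N Bs" and Bs: "Bs \<in> Omega Rels ar A k (univ N)" and "finite (univ N)"
    and b: "i < k" "b \<in> Bs i" "b' \<in> Bs i"
    and bs: "distinct bs" "set bs \<subseteq> univ N" and ok: "atom_ok Rels ar Cs (length bs) \<tau>"
  shows "holds N \<tau> (map (transp_fun b b') bs) = holds N \<tau> bs"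
proof -
  let ?t = "transp_fun b b'"
  have t: "?t x \<in> Bs l \<longleftrightarrow> x \<in> Bs l" if "l < k" for x l
    using transp_fun_mem_iff[OF OmegaD(2)[OF Bs]] b that by blast
  have t_univ: "?t x \<in> univ N" if "x \<in> univ N" for x
    using that b OmegaD(1)[OF Bs b(1)] by (auto simp: transp_fun_def)
  obtain g where g: "inj_on g (univ N)" "\<And>x l. x \<in> univ N \<Longrightarrow> l < k \<Longrightarrow> x \<in> Bs l \<Longrightarrow> g x \<in> A l"
    using exists_inj_into_classes[OF Bs \<open>finite (univ N)\<close>] by blast
  have "inj_on (g \<circ> ?t) (univ N)"
    using t_univ by (intro comp_inj_on inj_on_subset[OF inj_transp_fun] inj_on_subset[OF g(1)]) auto
  moreover have "(g \<circ> ?t) x \<in> A l" if "x \<in> univ N" "l < k" "x \<in> Bs l" for x l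
    using g(2) t t_univ that by simp
  ultimately have "holds N \<tau> bs = holds M \<tau> (map (g \<circ> ?t) bs)"
    using holds_map_from_blocks[OF N Bs _ _ bs ok] by blast
  also have "\<dots> = holds M \<tau> (map g (map ?t bs))" by simp
  also have "\<dots> = holds N \<tau> (map ?t bs)"
    using bs ok t_univ by (intro holds_map_from_blocks[OF N Bs g, symmetric])
      (auto simp: distinct_map inj_on_subset[OF inj_transp_fun])
  finally show ?thesis by simp
qed

section \<open>Partitions compatible via the same structure\<close>

lemma exists_inj_into_blocks_fixing:
  assumes Bs: "Bs \<in> Omega Rels ar A k X" and "finite X" and D: "finite D" "D \<subseteq> univ M"
    and cap: "\<And>l. nfin \<le> l \<Longrightarrow> l < k \<Longrightarrow> card (D \<inter> A l) \<le> K + 1"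
    and jj: "j < k" "j' < k" "j \<noteq> j'"
    and a: "a \<in> D" "a \<in> A j" and a': "a' \<in> D" "a' \<in> A j'" and b: "b \<in> Bs j" "b' \<in> Bs j'"
  obtains h where "inj_on h D" and "\<And>x l. x \<in> D \<Longrightarrow> l < k \<Longrightarrow> x \<in> A l \<Longrightarrow> h x \<in> Bs l"
    and "h a = b" and "h a' = b'"
proof -
  note disj = disjoint_family_onD[OF OmegaD(2)[OF Bs]]
  obtain h0 where h0: "inj_on h0 D" "\<And>x l. x \<in> D \<Longrightarrow> l < k \<Longrightarrow> x \<in> A l \<Longrightarrow> h0 x \<in> Bs l"
    using exists_inj_into_blocks[OF Bs \<open>finite X\<close> D cap] by blast
  define h1 where "h1 = transp_fun (h0 a) b \<circ> h0"
  have h1: "h1 x \<in> Bs l" if "x \<in> D" "l < k" "x \<in> A l" for x l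
    using h0(2)[OF that] h0(2)[OF a(1) jj(1) a(2)] b(1) jj(1) that(2)
      transp_fun_mem_iff[OF OmegaD(2)[OF Bs]] by (simp add: h1_def)
  define h where "h = transp_fun (h1 a') b' \<circ> h1"
  have "h x \<in> Bs l" if "x \<in> D" "l < k" "x \<in> A l" for x l
    using h1[OF that] h1[OF a'(1) jj(2) a'(2)] b(2) jj(2) that(2)
      transp_fun_mem_iff[OF OmegaD(2)[OF Bs]] by (simp add: h_def)
  moreover have "inj_on h D"
    unfolding h_def h1_def by (intro comp_inj_on h0(1) inj_on_subset[OF inj_transp_fun]) simp_all
  moreover have "h1 a' \<noteq> b" "b' \<noteq> b"
    using h1[OF a'(1) jj(2) a'(2)] b disj[of j j'] jj by auto
  then have "h a = b" by (simp add: h_def h1_def)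
  moreover have "h a' = b'" by (simp add: h_def)
  ultimately show ?thesis using that by blast
qed

lemma card_insert_pair_Int_A_le:
  assumes "j < k" "j' < k" "j \<noteq> j'" "a \<in> A j" "a' \<in> A j'" "a \<in> S \<or> a' \<in> S" "l < k"
    and "finite S"
  shows "card (insert a (insert a' S) \<inter> A l) \<le> card S"
proof -
  have "a \<notin> A l \<or> a' \<notin> A l" using A_unique assms(1-5,7) by blast
  then show ?thesis
    using card_insert_insert_Int_le[of S a "A l" a'] card_insert_insert_Int_le[of S a' "A l" a] assms(6,8)
    by (auto simp: insert_commute)
qed

text \<open>A short tuple of M through a and a' is realised in N with a, a' sent to b, b'.\<close>
lemma sim_if_holds_transp_blocks:
  assumes N: "compatible_via N P" and P: "P \<in> Omega Rels ar A k (univ N)" and "finite (univ N)"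
    and jj: "j < k" "j' < k" "j \<noteq> j'" and b: "b \<in> P j" "b' \<in> P j'" and a: "a \<in> A j" "a' \<in> A j'"
    and inv: "\<And>\<tau> bs. distinct bs \<Longrightarrow> set bs \<subseteq> univ N \<Longrightarrow> atom_ok Rels ar Cs (length bs) \<tau> \<Longrightarrow>
       holds N \<tau> (map (transp_fun b b') bs) = holds N \<tau> bs"
  shows "sim_M a a'"
proof -
  let ?t = "transp_fun a a'"
  have aM: "a \<in> univ M" "a' \<in> univ M" using a A_subset jj by auto
  have "aut ?t"
  proof (rule aut_if_preserves_short_atoms)
    show "bij_betw ?t (univ M) (univ M)" using aM by (rule bij_betw_transp_fun)
    fix \<tau> ds assume ds: "distinct ds" "set ds \<subseteq> univ M" "length ds \<le> K + 1"
      and ok: "atom_ok Rels ar Cs (length ds) \<tau>"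
    show "holds M \<tau> ds = holds M \<tau> (map ?t ds)"
    proof (cases "a \<in> set ds \<or> a' \<in> set ds")
      case False
      then have "map ?t ds = ds" by (intro map_idI) (metis transp_fun_simps(3))
      then show ?thesis by simp
    next
      case True
      define D where "D = insert a (insert a' (set ds))"
      have D: "finite D" "D \<subseteq> univ M" "set ds \<subseteq> D" using ds aM by (auto simp: D_def)
      have "card (D \<inter> A l) \<le> K + 1" if "l < k" for l
        using card_insert_pair_Int_A_le[OF jj a True that] ds(3) distinct_card[OF ds(1)]
        unfolding D_def by simp
      then obtain h where h: "inj_on h D" "\<And>x l. x \<in> D \<Longrightarrow> l < k \<Longrightarrow> x \<in> A l \<Longrightarrow> h x \<in> P l"
        and hab: "h a = b" "h a' = b'"
        using exists_inj_into_blocks_fixing[OF P \<open>finite (univ N)\<close> D(1,2) _ jj _ _ _ _ b, of a a']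
          a by (auto simp: D_def)
      have h_univ: "h x \<in> univ N" if "x \<in> D" for x
        using classes_to_blocks_mem_iff(2)[OF P _ D(2) that] h(2) by blast
      have t_ds: "distinct (map ?t ds)" "set (map ?t ds) \<subseteq> D"
        using ds(1) inj_on_subset[OF inj_transp_fun subset_UNIV] by (auto simp: distinct_map D_def transp_fun_def)
      have "holds M \<tau> ds = holds N \<tau> (map h ds)"
        using holds_map_to_blocks[OF N P D(2) h ds(1) D(3) ok] by simp
      also have "\<dots> = holds N \<tau> (map (transp_fun b b') (map h ds))"
        using inv[of "map h ds" \<tau>] ds(1) D(3) h(1) h_univ ok
        by (auto simp: distinct_map inj_on_subset)
      also have "map (transp_fun b b') (map h ds) = map h (map ?t ds)"
        using transp_fun_inj_on_commute[OF h(1)] D(3) hab by (auto simp: D_def)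
      also have "holds N \<tau> (map h (map ?t ds)) = holds M \<tau> (map ?t ds)"
        using holds_map_to_blocks[OF N P D(2) h t_ds] ok by simp
      finally show ?thesis .
    qed
  qed
  then show ?thesis using aM by (simp add: sim_def)
qed

lemma compatible_via_block_subset:
  assumes P: "P \<in> Omega Rels ar A k (univ N)" and Q: "Q \<in> Omega Rels ar A k (univ N)"
    and "finite (univ N)" and NP: "compatible_via N P" and NQ: "compatible_via N Q"
    and ij: "i < k" "j < k" and b: "b \<in> Q i" "b \<in> P j"
  shows "Q i \<subseteq> P j"
proof
  fix b' assume b': "b' \<in> Q i"
  obtain j' where j': "j' < k" "b' \<in> P j'"
    using Omega_cover[OF P] b' OmegaD(1)[OF Q ij(1)] by blast
  show "b' \<in> P j"
  proof (rule ccontr)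
    assume "b' \<notin> P j"
    then have "j \<noteq> j'" using j' by blast
    obtain a a' where a: "a \<in> A j" "a' \<in> A j'" using A_nonempty ij(2) j'(1) by blast
    have "sim_M a a'"
      using sim_if_holds_transp_blocks[OF NP P \<open>finite (univ N)\<close> ij(2) j'(1) \<open>j \<noteq> j'\<close> b(2) j'(2) a]
        holds_transp_block[OF NQ Q \<open>finite (univ N)\<close> ij(1) b(1) b'] by blast
    then have "a' \<in> A j" using A_sim_closed ij(2) a(1) by blast
    then show False using A_unique[OF ij(2) j'(1) _ a(2)] \<open>j \<noteq> j'\<close> by blast
  qed
qed

lemma compatible_via_blocks_permuted:
  assumes P: "P \<in> Omega Rels ar A k (univ N)" and Q: "Q \<in> Omega Rels ar A k (univ N)"
    and "finite (univ N)" and NP: "compatible_via N P" and NQ: "compatible_via N Q"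
  obtains \<sigma> where "\<sigma> permutes {..<k}" and "Q = P \<circ> \<sigma>"
proof -
  have "\<exists>j<k. Q i = P j" if i: "i < k" for i
  proof -
    obtain b where b: "b \<in> Q i" using Omega_nonempty[OF Q i] by blast
    then obtain j where j: "j < k" "b \<in> P j"
      using Omega_cover[OF P] OmegaD(1)[OF Q i] by blast
    have "Q i \<subseteq> P j" "P j \<subseteq> Q i"
      using compatible_via_block_subset[OF P Q \<open>finite (univ N)\<close> NP NQ i j(1) b j(2)]
        compatible_via_block_subset[OF Q P \<open>finite (univ N)\<close> NQ NP j(1) i j(2) b] by auto
    then show ?thesis using j(1) by blast
  qed
  then obtain \<sigma>0 where \<sigma>0: "\<And>i. i < k \<Longrightarrow> \<sigma>0 i < k \<and> Q i = P (\<sigma>0 i)" by metis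
  define \<sigma> where "\<sigma> i = (if i < k then \<sigma>0 i else i)" for i
  have "inj_on \<sigma> {..<k}"
  proof (rule inj_onI)
    fix i i' assume "i \<in> {..<k}" "i' \<in> {..<k}" "\<sigma> i = \<sigma> i'"
    then have ik: "i < k" "i' < k" and "Q i = Q i'" using \<sigma>0 by (auto simp: \<sigma>_def)
    then show "i = i'"
      using Omega_nonempty[OF Q ik(1)] disjoint_family_onD[OF OmegaD(2)[OF Q], of i i'] by auto
  qed
  moreover have "\<sigma> ` {..<k} \<subseteq> {..<k}" using \<sigma>0 by (auto simp: \<sigma>_def)
  ultimately have "\<sigma> ` {..<k} = {..<k}" by (intro endo_inj_surj) auto
  with \<open>inj_on \<sigma> {..<k}\<close> have "\<sigma> permutes {..<k}"
    by (intro bij_imp_permutes) (auto simp: bij_betw_def \<sigma>_def)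
  moreover have "Q = P \<circ> \<sigma>"
    using \<sigma>0 OmegaD(6)[OF Q] OmegaD(6)[OF P] by (auto simp: fun_eq_iff \<sigma>_def not_less)
  ultimately show ?thesis using that by blast
qed

lemma exists_bij_permuting_classes:
  assumes \<sigma>: "\<sigma> permutes {..<k}"
    and fin: "\<And>i. i < k \<Longrightarrow> finite (A (\<sigma> i)) \<longleftrightarrow> finite (A i)"
    and card: "\<And>i. i < k \<Longrightarrow> finite (A i) \<Longrightarrow> card (A (\<sigma> i)) = card (A i)"
  obtains G where "bij_betw G (univ M) (univ M)" and "\<And>i. i < k \<Longrightarrow> G ` A i = A (\<sigma> i)"
proof -
  have "\<exists>F. bij_betw F (A i) (A (\<sigma> i))" if i: "i < k" for i
  proof (cases "finite (A i)")
    case True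
    then show ?thesis using fin[OF i] card[OF i] finite_same_card_bij by metis
  next
    case False
    then have "infinite (A (\<sigma> i))" using fin[OF i] by simp
    then show ?thesis
      using bij_betw_trans[OF bij_betw_inv_into[OF bij_enumerate[OF False]] bij_enumerate] by blast
  qed
  then obtain F where F: "\<And>i. i \<in> {..<k} \<Longrightarrow> bij_betw (F i) (A i) (A (\<sigma> i))"
    by (metis lessThan_iff)
  have \<sigma>_inj: "inj \<sigma>" using permutes_inj[OF \<sigma>] .
  have "disjoint_family_on (\<lambda>i. A (\<sigma> i)) {..<k}"
    using disjoint_family_onD[OF disjoint_family_A] permutes_in_image[OF \<sigma>] \<sigma>_inj
    by (auto simp: disjoint_family_on_def inj_eq)
  then obtain G where G: "\<And>i x. i \<in> {..<k} \<Longrightarrow> x \<in> A i \<Longrightarrow> G x = F i x"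
    and bij: "bij_betw G (\<Union>i<k. A i) (\<Union>i<k. A (\<sigma> i))"
    using bij_betw_glue[OF disjoint_family_A _ F] by blast
  have "(\<Union>i<k. A (\<sigma> i)) = (\<Union>j\<in>\<sigma> ` {..<k}. A j)" by (simp add: image_image)
  then have "(\<Union>i<k. A (\<sigma> i)) = univ M" using permutes_image[OF \<sigma>] UN_A by simp
  then have "bij_betw G (univ M) (univ M)" using bij UN_A by simp
  moreover have "G ` A i = A (\<sigma> i)" if "i < k" for i
    using G[of i] F[of i] that by (simp add: bij_betw_def cong: image_cong)
  ultimately show ?thesis using that by blast
qed

lemma aut_if_compatible_via_permuted:
  assumes P: "P \<in> Omega Rels ar A k (univ N)" and Q: "Q \<in> Omega Rels ar A k (univ N)"
    and "finite (univ N)" and NP: "compatible_via N P" and NQ: "compatible_via N Q"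
    and \<sigma>: "\<sigma> permutes {..<k}" and QP: "Q = P \<circ> \<sigma>"
    and G: "bij_betw G (univ M) (univ M)"
    and G_mem: "\<And>x i. x \<in> univ M \<Longrightarrow> i < k \<Longrightarrow> G x \<in> A (\<sigma> i) \<longleftrightarrow> x \<in> A i"
  shows "aut G"
proof (rule aut_if_preserves_short_atoms[OF G])
  fix \<tau> ds assume ds: "distinct ds" "set ds \<subseteq> univ M" "length ds \<le> K + 1"
    and ok: "atom_ok Rels ar Cs (length ds) \<tau>"
  have cap: "card (set ds \<inter> A l) \<le> K + 1" if "nfin \<le> l" "l < k" for l
  proof -
    have "card (set ds \<inter> A l) \<le> card (set ds)" by (rule card_mono) auto
    then show ?thesis using ds(3) distinct_card[OF ds(1)] by simp
  qed
  obtain h where h: "inj_on h (set ds)" "\<And>x l. x \<in> set ds \<Longrightarrow> l < k \<Longrightarrow> x \<in> A l \<Longrightarrow> h x \<in> Q l"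
    using exists_inj_into_blocks[OF Q \<open>finite (univ N)\<close> finite_set ds(2) cap] by blast
  have "\<forall>x\<in>set ds. \<forall>l<k. x \<in> A l \<longrightarrow> h x \<in> Q l" using h(2) by blast
  note h_mem = classes_to_blocks_mem_iff[OF Q this ds(2)]
  have "holds M \<tau> ds = holds N \<tau> (map h ds)"
    using holds_map_to_blocks[OF NQ Q ds(2) h ds(1) _ ok] by simp
  also have "\<dots> = holds M \<tau> (map G ds)"
  proof (rule compatible_viaD[OF NP])
    show "distinct (map h ds)" "distinct (map G ds)"
      using ds h(1) inj_on_subset[of G "univ M"] G by (auto simp: distinct_map bij_betw_def)
    show "set (map G ds) \<subseteq> univ M" using ds(2) G by (auto simp: bij_betw_def)
    fix l j assume l: "l < k" and j: "j < length (map h ds)"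
    define i where "i = inv \<sigma> l"
    have i: "i < k" "\<sigma> i = l"
      using permutes_in_image[OF permutes_inv[OF \<sigma>], of l] l permutes_inverses(1)[OF \<sigma>]
      by (auto simp: i_def)
    have dj: "ds ! j \<in> set ds" using j by simp
    have "map h ds ! j \<in> P l \<longleftrightarrow> h (ds ! j) \<in> Q i" using i QP j by simp
    also have "\<dots> \<longleftrightarrow> ds ! j \<in> A i" using h_mem(1)[OF dj i(1)] .
    also have "\<dots> \<longleftrightarrow> map G ds ! j \<in> A l"
      using G_mem[OF _ i(1), of "ds ! j"] dj ds(2) i(2) j by (simp add: subset_iff)
    finally show "map h ds ! j \<in> P l \<longleftrightarrow> map G ds ! j \<in> A l" .
  next
    show "set (map h ds) \<subseteq> univ N" using h_mem(2) by auto
  qed (use ok in simp_all)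
  finally show "holds M \<tau> ds = holds M \<tau> (map G ds)" .
qed

lemma permuted_blocks_in_AutStar:
  assumes P: "P \<in> Omega Rels ar A k (univ N)" and Q: "Q \<in> Omega Rels ar A k (univ N)"
    and "finite (univ N)" and NP: "compatible_via N P" and NQ: "compatible_via N Q"
    and \<sigma>: "\<sigma> permutes {..<k}" and QP: "Q = P \<circ> \<sigma>"
  shows "\<sigma> \<in> AutStar Rels Cs M A k"
proof -
  have \<sigma>k: "\<sigma> i < k" if "i < k" for i using permutes_in_image[OF \<sigma>] that by simp
  have nfin_iff: "\<sigma> i < nfin \<longleftrightarrow> i < nfin" if i: "i < k" for i
    using Omega_card_le_K_iff[OF Q i] Omega_card_le_K_iff[OF P \<sigma>k[OF i]] QP by simp
  have fin: "finite (A (\<sigma> i)) \<longleftrightarrow> finite (A i)" if "i < k" for i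
    using finite_A_iff \<sigma>k nfin_iff that by simp
  have card: "card (A (\<sigma> i)) = card (A i)" if "i < k" "finite (A i)" for i
  proof -
    have "i < nfin" "\<sigma> i < nfin" using finite_A_iff nfin_iff that by auto
    then show ?thesis using OmegaD(4)[OF Q] OmegaD(4)[OF P, of "\<sigma> i"] QP by simp
  qed
  obtain G where G: "bij_betw G (univ M) (univ M)" "\<And>i. i < k \<Longrightarrow> G ` A i = A (\<sigma> i)"
    using exists_bij_permuting_classes[OF \<sigma> fin card] by metis
  have disj_\<sigma>: "disjoint_family_on (\<lambda>i. A (\<sigma> i)) {..<k}"
    using disjoint_family_onD[OF disjoint_family_A] \<sigma>k permutes_inj[OF \<sigma>]
    by (auto simp: disjoint_family_on_def inj_eq)
  have "G x \<in> A (\<sigma> i) \<longleftrightarrow> x \<in> A i" if "x \<in> univ M" "i < k" for x i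
  proof -
    obtain i' where "i' \<in> {..<k}" "x \<in> A i'" using A_cover \<open>x \<in> univ M\<close> by (metis lessThan_iff)
    moreover have "G x \<in> A (\<sigma> l)" if "l \<in> {..<k}" "x \<in> A l" for l
      using G(2)[of l] that by blast
    ultimately show ?thesis
      using maps_into_family_mem_iff[OF disj_\<sigma>, where P = A and h = G and x = x] that(2) by simp
  qed
  then have "aut G"
    using aut_if_compatible_via_permuted[OF P Q \<open>finite (univ N)\<close> NP NQ \<sigma> QP G(1)] by blast
  then show ?thesis unfolding AutStar_def using \<sigma> G(2) by blast
qed

section \<open>The structure pulled back from M\<close>

definition emb :: "nat \<Rightarrow> (nat \<Rightarrow> nat set) \<Rightarrow> nat \<Rightarrow> nat" where
  "emb n Bs = (SOME g. inj_on g {1..n} \<and> (\<forall>x\<in>{1..n}. \<forall>l<k. x \<in> Bs l \<longrightarrow> g x \<in> A l))"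

definition pullback :: "nat \<Rightarrow> (nat \<Rightarrow> nat set) \<Rightarrow> ('r,'c) struc" where
  "pullback n Bs = Struc {1..n} (\<lambda>r xs. rel M r (map (emb n Bs) xs) \<and> set xs \<subseteq> {1..n})
     (\<lambda>c. if c \<in> Cs then inv_into {1..n} (emb n Bs) (cst M c) else undefined)"

lemma emb:
  assumes "Bs \<in> Omega Rels ar A k {1..n}"
  shows "inj_on (emb n Bs) {1..n}" and "\<forall>x\<in>{1..n}. \<forall>l<k. x \<in> Bs l \<longrightarrow> emb n Bs x \<in> A l"
proof -
  obtain g where "inj_on g {1..n}" "\<And>x l. x \<in> {1..n} \<Longrightarrow> l < k \<Longrightarrow> x \<in> Bs l \<Longrightarrow> g x \<in> A l"
    using exists_inj_into_classes[OF assms] by blast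
  then have "\<exists>g. inj_on g {1..n} \<and> (\<forall>x\<in>{1..n}. \<forall>l<k. x \<in> Bs l \<longrightarrow> g x \<in> A l)" by blast
  from someI_ex[OF this] show "inj_on (emb n Bs) {1..n}"
    and "\<forall>x\<in>{1..n}. \<forall>l<k. x \<in> Bs l \<longrightarrow> emb n Bs x \<in> A l"
    unfolding emb_def by blast+
qed

lemma cst_in_image_emb:
  assumes Bs: "Bs \<in> Omega Rels ar A k {1..n}" and c: "c \<in> Cs"
  shows "cst M c \<in> emb n Bs ` {1..n}"
proof -
  have "cst M c \<in> univ M" using wf_M c by (simp add: wf_struc_def)
  then obtain l where l: "l < k" "cst M c \<in> A l" by (rule A_cover)
  then have Al: "A l = {cst M c}" using cst_class_singleton c by blast
  then have "l < nfin" using finite_A_iff[OF l(1)] by simp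
  then have "card (Bs l) = 1" using OmegaD(4)[OF Bs] Al by simp
  then obtain b where b: "Bs l = {b}" using card_1_singletonE by blast
  then have "b \<in> {1..n}" using OmegaD(1)[OF Bs l(1)] by auto
  moreover have "emb n Bs b \<in> A l" using emb(2)[OF Bs] \<open>b \<in> {1..n}\<close> l(1) b by simp
  ultimately show ?thesis using Al by (metis image_eqI singletonD)
qed

lemma pullback_simps:
  "univ (pullback n Bs) = {1..n}"
  "rel (pullback n Bs) r xs \<longleftrightarrow> rel M r (map (emb n Bs) xs) \<and> set xs \<subseteq> {1..n}"
  "cst (pullback n Bs) c = (if c \<in> Cs then inv_into {1..n} (emb n Bs) (cst M c) else undefined)"
  by (simp_all add: pullback_def)

lemma wf_pullback:
  assumes Bs: "Bs \<in> Omega Rels ar A k {1..n}"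
  shows "wf_struc Rels ar Cs (pullback n Bs)"
  unfolding wf_struc_def pullback_simps
proof (intro conjI allI impI ballI)
  fix r xs assume "rel M r (map (emb n Bs) xs) \<and> set xs \<subseteq> {1..n}"
  then show "r \<in> Rels" "length xs = ar r" "set xs \<subseteq> {1..n}"
    using wf_M unfolding wf_struc_def by (metis length_map)+
qed (use inv_into_into[OF cst_in_image_emb[OF Bs]] in simp_all)

lemma tval_pullback:
  assumes Bs: "Bs \<in> Omega Rels ar A k {1..n}" and t: "trm_ok Cs (length bs) t" and bs: "set bs \<subseteq> {1..n}"
  shows "emb n Bs (tval (pullback n Bs) bs t) = tval M (map (emb n Bs) bs) t"
    and "tval (pullback n Bs) bs t \<in> {1..n}"
proof -
  have "emb n Bs (tval (pullback n Bs) bs t) = tval M (map (emb n Bs) bs) t \<and>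
    tval (pullback n Bs) bs t \<in> {1..n}"
  proof (cases t)
    case (V i)
    then have "bs ! i \<in> {1..n}" using t bs nth_mem by fastforce
    then show ?thesis using V t by simp
  next
    case (C c)
    then show ?thesis using t f_inv_into_f[OF cst_in_image_emb[OF Bs]] inv_into_into[OF cst_in_image_emb[OF Bs]]
      by (simp add: pullback_simps)
  qed
  then show "emb n Bs (tval (pullback n Bs) bs t) = tval M (map (emb n Bs) bs) t"
    and "tval (pullback n Bs) bs t \<in> {1..n}" by simp_all
qed

lemma holds_pullback:
  assumes Bs: "Bs \<in> Omega Rels ar A k {1..n}" and ok: "atom_ok Rels ar Cs (length bs) \<tau>"
    and bs: "set bs \<subseteq> {1..n}"
  shows "holds (pullback n Bs) \<tau> bs = holds M \<tau> (map (emb n Bs) bs)"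
proof (cases \<tau>)
  case (R r ts)
  then have "map (emb n Bs) (map (tval (pullback n Bs) bs) ts) = map (tval M (map (emb n Bs) bs)) ts"
    and "set (map (tval (pullback n Bs) bs) ts) \<subseteq> {1..n}"
    using tval_pullback[OF Bs _ bs] ok by auto
  then show ?thesis using R by (simp only: holds.simps pullback_simps simp_thms)
next
  case (Eq t u)
  then have "trm_ok Cs (length bs) t" "trm_ok Cs (length bs) u" using ok by auto
  then show ?thesis
    using Eq tval_pullback[OF Bs _ bs] inj_on_eq_iff[OF emb(1)[OF Bs]] by (metis holds.simps(2))
qed

lemma compatible_via_pullback:
  assumes Bs: "Bs \<in> Omega Rels ar A k {1..n}"
  shows "compatible_via (pullback n Bs) Bs"
  unfolding compatible_via_def
proof (intro allI impI, elim conjE)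
  fix \<tau> bs as
  assume ok: "atom_ok Rels ar Cs (length bs) \<tau>" and len: "length as = length bs"
    and bs: "distinct bs" "set bs \<subseteq> univ (pullback n Bs)" and as: "distinct as" "set as \<subseteq> univ M"
    and same: "\<forall>i<k. \<forall>j<length bs. (bs ! j \<in> Bs i) = (as ! j \<in> A i)"
  note mem = blocks_to_classes_mem_iff[OF Bs emb(2)[OF Bs]]
  have bs_n: "set bs \<subseteq> {1..n}" using bs(2) by (simp add: pullback_simps)
  have "holds (pullback n Bs) \<tau> bs = holds M \<tau> (map (emb n Bs) bs)"
    using holds_pullback[OF Bs ok bs_n] .
  also have "\<dots> = holds M \<tau> as"
  proof (rule holds_eq_if_same_classes)
    show "distinct (map (emb n Bs) bs)"
      using bs(1) bs_n emb(1)[OF Bs] by (simp add: distinct_map inj_on_subset)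
    show "set (map (emb n Bs) bs) \<subseteq> univ M" using mem(2) bs_n by auto
    fix i j assume "i < k" "j < length (map (emb n Bs) bs)"
    moreover from this have "bs ! j \<in> {1..n}" using bs_n nth_mem by (metis length_map subsetD)
    ultimately show "map (emb n Bs) bs ! j \<in> A i \<longleftrightarrow> as ! j \<in> A i" using mem(1) same by simp
  qed (use len as ok in auto)
  finally show "holds (pullback n Bs) \<tau> bs = holds M \<tau> as" .
qed

lemma pullback_in_H:
  assumes Bs: "Bs \<in> Omega Rels ar A k {1..n}" and H: "hereditary Rels ar Cs H" and "M \<in> H"
  shows "pullback n Bs \<in> H"
proof -
  let ?g = "emb n Bs"
  let ?f = "inv_into {1..n} ?g"
  define S where "S = Struc (?g ` {1..n}) (\<lambda>r xs. rel M r xs \<and> set xs \<subseteq> ?g ` {1..n}) (cst M)"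
  have sub: "?g ` {1..n} \<subseteq> univ M" using blocks_to_classes_mem_iff(2)[OF Bs emb(2)[OF Bs]] by auto
  have "wf_struc Rels ar Cs S"
    using wf_M cst_in_image_emb[OF Bs] unfolding wf_struc_def S_def by auto
  moreover have "substructure Rels Cs S M" unfolding substructure_def S_def using sub by auto
  ultimately have "S \<in> H" using H \<open>M \<in> H\<close> unfolding hereditary_def by blast
  have bij: "bij_betw ?g {1..n} (?g ` {1..n})" using emb(1)[OF Bs] by (simp add: inj_on_imp_bij_betw)
  have "iso_map Rels Cs S (pullback n Bs) ?f"
    unfolding iso_map_def
  proof (intro conjI ballI allI impI)
    show "bij_betw ?f (univ S) (univ (pullback n Bs))"
      using bij_betw_inv_into[OF bij] by (simp add: S_def pullback_simps)
    fix r xs assume "set xs \<subseteq> univ S"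
    then have xs: "set xs \<subseteq> ?g ` {1..n}" by (simp add: S_def)
    then have "map ?g (map ?f xs) = xs" by (auto intro!: map_idI simp: f_inv_into_f)
    moreover have "set (map ?f xs) \<subseteq> {1..n}" using xs by (auto intro: inv_into_into)
    ultimately show "rel (pullback n Bs) r (map ?f xs) = rel S r xs"
      using xs by (simp add: S_def pullback_simps)
  qed (simp add: S_def pullback_simps)
  then show ?thesis
    using H \<open>S \<in> H\<close> wf_pullback[OF Bs] unfolding hereditary_def isomorphic_def by blast
qed

lemma compatible_via_imp_eq_pullback:
  assumes Bs: "Bs \<in> Omega Rels ar A k {1..n}" and wf: "wf_struc Rels ar Cs N"
    and N_n: "univ N = {1..n}" and N: "compatible_via N Bs"
  shows "N = pullback n Bs"
proof -
  have Bs_N: "Bs \<in> Omega Rels ar A k (univ N)" using Bs N_n by simp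
  have holds_emb: "holds N \<tau> bs = holds M \<tau> (map (emb n Bs) bs)"
    if "distinct bs" "set bs \<subseteq> {1..n}" "atom_ok Rels ar Cs (length bs) \<tau>" for \<tau> bs
  proof (rule holds_map_from_blocks[OF N Bs_N])
    show "inj_on (emb n Bs) (univ N)" using emb(1)[OF Bs] N_n by simp
    show "emb n Bs x \<in> A l" if "x \<in> univ N" "l < k" "x \<in> Bs l" for x l
      using emb(2)[OF Bs] N_n that by blast
  qed (use that N_n in simp_all)
  have "rel N r xs = rel (pullback n Bs) r xs" for r xs
  proof (cases "r \<in> Rels \<and> length xs = ar r \<and> set xs \<subseteq> {1..n}")
    case False
    then show ?thesis using wf wf_pullback[OF Bs] N_n unfolding wf_struc_def pullback_simps by blast
  next
    case True
    define ds where "ds = remdups xs"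
    obtain idx where idx: "xs = map (nth ds) idx" "\<forall>i\<in>set idx. i < length ds"
      using list_eq_map_nth[of xs ds] ds_def by auto
    have "atom_ok Rels ar Cs (length ds) (R r (map V idx))" using True idx by auto
    then have "holds N (R r (map V idx)) ds = holds M (R r (map V idx)) (map (emb n Bs) ds)"
      using True ds_def by (intro holds_emb) auto
    moreover have "map (nth (map (emb n Bs) ds)) idx = map (emb n Bs) xs" using idx by auto
    ultimately show ?thesis using idx(1) True by (simp only: holds_R_map_V) (simp add: pullback_simps)
  qed
  moreover have "cst N c = cst (pullback n Bs) c" for c
  proof (cases "c \<in> Cs")
    case False
    then show ?thesis using wf wf_pullback[OF Bs] unfolding wf_struc_def by simp
  next
    case True
    then have b: "cst N c \<in> {1..n}" using wf N_n unfolding wf_struc_def by auto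
    then have "holds N (Eq (C c) (V 0)) [cst N c] = holds M (Eq (C c) (V 0)) [emb n Bs (cst N c)]"
      using holds_emb[of "[cst N c]" "Eq (C c) (V 0)"] True by simp
    then show ?thesis using True b emb(1)[OF Bs] by (simp add: pullback_simps inv_into_f_f)
  qed
  ultimately show ?thesis using N_n by (intro struc.expand) (auto simp: pullback_simps fun_eq_iff)
qed

section \<open>Counting the fibres\<close>

lemma Omega_comp_AutStar:
  assumes Bs: "Bs \<in> Omega Rels ar A k X" and \<sigma>: "\<sigma> \<in> AutStar Rels Cs M A k"
  shows "Bs \<circ> \<sigma> \<in> Omega Rels ar A k X"
proof -
  obtain f where perm: "\<sigma> permutes {..<k}" and f: "aut f" "\<And>i. i < k \<Longrightarrow> f ` A i = A (\<sigma> i)"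
    using \<sigma> unfolding AutStar_def by blast
  have \<sigma>k: "\<sigma> i < k" if "i < k" for i using permutes_in_image[OF perm] that by simp
  have inj_A: "inj_on f (A i)" if "i < k" for i
    using aut_bij_betw[OF f(1)] A_subset[OF that] by (auto simp: bij_betw_def intro: inj_on_subset)
  have fin: "\<sigma> i < nfin \<longleftrightarrow> i < nfin" if i: "i < k" for i
    using finite_A_iff[OF i] finite_A_iff[OF \<sigma>k[OF i]] f(2)[OF i] finite_image_iff[OF inj_A[OF i]] by simp
  show ?thesis
  proof (rule OmegaI)
    show "(Bs \<circ> \<sigma>) i \<subseteq> X" if "i < k" for i using OmegaD(1)[OF Bs \<sigma>k[OF that]] by simp
    show "disjoint_family_on (Bs \<circ> \<sigma>) {..<k}"
      using disjoint_family_onD[OF OmegaD(2)[OF Bs]] \<sigma>k permutes_inj[OF perm]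
      by (auto simp: disjoint_family_on_def inj_eq)
    have "(\<Union>i<k. Bs (\<sigma> i)) = (\<Union>j\<in>\<sigma> ` {..<k}. Bs j)" by (simp add: image_image)
    then show "(\<Union>i<k. (Bs \<circ> \<sigma>) i) = X" using permutes_image[OF perm] OmegaD(3)[OF Bs] by simp
    show "card ((Bs \<circ> \<sigma>) i) = card (A i)" if i: "i < nfin" for i
    proof -
      have ik: "i < k" using i nfin_le_k by simp
      then have "card (A (\<sigma> i)) = card (A i)" using f(2) card_image[OF inj_A] by metis
      then show ?thesis using OmegaD(4)[OF Bs] fin[OF ik] i by simp
    qed
    show "K < card ((Bs \<circ> \<sigma>) i)" if "nfin \<le> i" "i < k" for i
      using OmegaD(5)[OF Bs, of "\<sigma> i"] fin[of i] \<sigma>k[of i] that by simp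
    show "(Bs \<circ> \<sigma>) i = {}" if "k \<le> i" for i
      using permutes_not_in[OF perm, of i] that OmegaD(6)[OF Bs] by simp
  qed
qed

lemma compatible_via_comp_AutStar:
  assumes N: "compatible_via N Bs" and \<sigma>: "\<sigma> \<in> AutStar Rels Cs M A k"
  shows "compatible_via N (Bs \<circ> \<sigma>)"
  unfolding compatible_via_def
proof (intro allI impI, elim conjE)
  fix \<tau> bs as
  assume ok: "atom_ok Rels ar Cs (length bs) \<tau>" and len: "length as = length bs"
    and bs: "distinct bs" "set bs \<subseteq> univ N" and as: "distinct as" "set as \<subseteq> univ M"
    and same: "\<forall>i<k. \<forall>j<length bs. (bs ! j \<in> (Bs \<circ> \<sigma>) i) = (as ! j \<in> A i)"
  obtain f where perm: "\<sigma> permutes {..<k}" and f: "aut f" "\<And>i. i < k \<Longrightarrow> f ` A i = A (\<sigma> i)"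
    using \<sigma> unfolding AutStar_def by blast
  have inj_f: "inj_on f (univ M)" using aut_bij_betw[OF f(1)] by (simp add: bij_betw_def)
  have "holds N \<tau> bs = holds M \<tau> (map f as)"
  proof (rule compatible_viaD[OF N ok])
    show "distinct (map f as)" using as inj_f by (simp add: distinct_map inj_on_subset)
    show "set (map f as) \<subseteq> univ M" using as aut_bij_betw[OF f(1)] by (auto simp: bij_betw_def)
    fix l j assume l: "l < k" and j: "j < length bs"
    define i where "i = inv \<sigma> l"
    have i: "i < k" "\<sigma> i = l"
      using permutes_in_image[OF permutes_inv[OF perm], of l] l permutes_inverses(1)[OF perm]
      by (auto simp: i_def)
    have aj: "as ! j \<in> univ M" using as(2) j len nth_mem by fastforce
    have "bs ! j \<in> Bs l \<longleftrightarrow> as ! j \<in> A i" using same i j by auto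
    also have "\<dots> \<longleftrightarrow> f (as ! j) \<in> f ` A i" using inj_on_image_mem_iff[OF inj_f aj A_subset[OF i(1)]] by simp
    also have "\<dots> \<longleftrightarrow> map f as ! j \<in> A l" using f(2) i j len by simp
    finally show "bs ! j \<in> Bs l \<longleftrightarrow> map f as ! j \<in> A l" .
  qed (use len bs in simp_all)
  also have "\<dots> = holds M \<tau> as" using holds_aut[OF f(1) _ as(2)] ok len by simp
  finally show "holds N \<tau> bs = holds M \<tau> as" .
qed

lemma pullback_comp_AutStar:
  assumes Bs: "Bs \<in> Omega Rels ar A k {1..n}" and \<sigma>: "\<sigma> \<in> AutStar Rels Cs M A k"
  shows "pullback n (Bs \<circ> \<sigma>) = pullback n Bs"
  using compatible_via_imp_eq_pullback[OF Omega_comp_AutStar[OF Bs \<sigma>] wf_pullback[OF Bs] _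
      compatible_via_comp_AutStar[OF compatible_via_pullback[OF Bs] \<sigma>]]
  by (simp add: pullback_simps)

lemma pullback_fibre:
  assumes Bs: "Bs \<in> Omega Rels ar A k {1..n}"
  shows "{Bs' \<in> Omega Rels ar A k {1..n}. pullback n Bs' = pullback n Bs} = (\<lambda>\<sigma>. Bs \<circ> \<sigma>) ` AutStar Rels Cs M A k"
proof (intro subset_antisym subsetI)
  fix Bs' assume "Bs' \<in> {Bs' \<in> Omega Rels ar A k {1..n}. pullback n Bs' = pullback n Bs}"
  then have Bs': "Bs' \<in> Omega Rels ar A k {1..n}" and eq: "pullback n Bs' = pullback n Bs" by auto
  let ?N = "pullback n Bs"
  have N: "compatible_via ?N Bs" "compatible_via ?N Bs'"
    using compatible_via_pullback[OF Bs] compatible_via_pullback[OF Bs'] eq by auto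
  have univ_N: "univ ?N = {1..n}" by (simp add: pullback_simps)
  obtain \<sigma> where \<sigma>: "\<sigma> permutes {..<k}" and Bs'_eq: "Bs' = Bs \<circ> \<sigma>"
    using compatible_via_blocks_permuted[of Bs ?N Bs'] Bs Bs' N univ_N by auto
  then have "\<sigma> \<in> AutStar Rels Cs M A k"
    using permuted_blocks_in_AutStar[of Bs ?N Bs'] Bs Bs' N univ_N by auto
  then show "Bs' \<in> (\<lambda>\<sigma>. Bs \<circ> \<sigma>) ` AutStar Rels Cs M A k" using Bs'_eq by blast
qed (use Omega_comp_AutStar[OF Bs] pullback_comp_AutStar[OF Bs] in auto)

lemma inj_on_comp_AutStar:
  assumes Bs: "Bs \<in> Omega Rels ar A k X"
  shows "inj_on (\<lambda>\<sigma>. Bs \<circ> \<sigma>) (AutStar Rels Cs M A k)"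
proof (rule inj_onI)
  fix \<sigma> \<sigma>' assume "\<sigma> \<in> AutStar Rels Cs M A k" "\<sigma>' \<in> AutStar Rels Cs M A k" and eq: "Bs \<circ> \<sigma> = Bs \<circ> \<sigma>'"
  then have p: "\<sigma> permutes {..<k}" "\<sigma>' permutes {..<k}" unfolding AutStar_def by auto
  show "\<sigma> = \<sigma>'"
  proof
    fix i show "\<sigma> i = \<sigma>' i"
    proof (cases "i < k")
      case True
      then have k: "\<sigma> i < k" "\<sigma>' i < k" using permutes_in_image[OF p(1)] permutes_in_image[OF p(2)] by auto
      have "Bs (\<sigma> i) = Bs (\<sigma>' i)" using eq by (metis comp_apply)
      then show ?thesis
        using Omega_nonempty[OF Bs k(1)] disjoint_family_onD[OF OmegaD(2)[OF Bs], of "\<sigma> i" "\<sigma>' i"] k by auto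
    qed (use permutes_not_in[OF p(1)] permutes_not_in[OF p(2)] in simp)
  qed
qed

lemma card_AutStar_pos: "card (AutStar Rels Cs M A k) > 0"
proof -
  have "AutStar Rels Cs M A k \<subseteq> {p. p permutes {..<k}}" unfolding AutStar_def by blast
  then have "finite (AutStar Rels Cs M A k)" using finite_permutations finite_subset by blast
  moreover have "id \<in> AutStar Rels Cs M A k" unfolding AutStar_def using aut_id by auto
  ultimately show ?thesis by (auto simp: card_gt_0_iff)
qed

lemma compatible_in_H_eq_pullbacks:
  assumes H: "hereditary Rels ar Cs H" and "M \<in> H"
  shows "{N \<in> Hn H n. compatible Rels ar Cs M A k N} = pullback n ` Omega Rels ar A k {1..n}"
proof (intro subset_antisym subsetI)
  fix N assume "N \<in> {N \<in> Hn H n. compatible Rels ar Cs M A k N}"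
  then have "N \<in> H" and N_n: "univ N = {1..n}" and "compatible Rels ar Cs M A k N"
    by (auto simp: Hn_def)
  then obtain Bs where "Bs \<in> Omega Rels ar A k {1..n}" "compatible_via N Bs"
    using compatible_iff_compatible_via by auto
  moreover have "wf_struc Rels ar Cs N" using H \<open>N \<in> H\<close> unfolding hereditary_def by blast
  ultimately show "N \<in> pullback n ` Omega Rels ar A k {1..n}"
    using compatible_via_imp_eq_pullback N_n by blast
next
  fix N assume "N \<in> pullback n ` Omega Rels ar A k {1..n}"
  then obtain Bs where Bs: "Bs \<in> Omega Rels ar A k {1..n}" and N: "N = pullback n Bs" by blast
  then show "N \<in> {N \<in> Hn H n. compatible Rels ar Cs M A k N}"
    using pullback_in_H[OF Bs H \<open>M \<in> H\<close>] compatible_via_pullback[OF Bs]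
    by (auto simp: Hn_def compatible_iff_compatible_via pullback_simps)
qed

lemma card_Omega_eq:
  assumes "hereditary Rels ar Cs H" and "M \<in> H"
  shows "card (Omega Rels ar A k {1..n}) =
    card {N \<in> Hn H n. compatible Rels ar Cs M A k N} * card (AutStar Rels Cs M A k)"
  unfolding compatible_in_H_eq_pullbacks[OF assms]
proof (rule card_eq_card_image_mult[OF finite_Omega[OF finite_atLeastAtMost]])
  fix N assume "N \<in> pullback n ` Omega Rels ar A k {1..n}"
  then obtain Bs where Bs: "Bs \<in> Omega Rels ar A k {1..n}" and N: "N = pullback n Bs" by blast
  show "card {Bs' \<in> Omega Rels ar A k {1..n}. pullback n Bs' = N} = card (AutStar Rels Cs M A k)"
    using pullback_fibre[OF Bs] card_image[OF inj_on_comp_AutStar[OF Bs]] N by simp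
qed

end

text \<open>The count is exact for every n.\<close>
theorem mainTheorem5:
  fixes Rels :: "'r set" and ar :: "'r \<Rightarrow> nat" and Cs :: "'c set"
    and H :: "('r,'c) struc set" and M :: "('r,'c) struc"
    and A :: "nat \<Rightarrow> nat set" and k :: nat
  assumes "finite Rels" and "finite Cs"
    and "hereditary Rels ar Cs H" and "nontrivial H" and "basic Rels Cs H"
    and "M \<in> H" and "infinite (univ M)"
    and "class_enum Rels Cs M A k"
  shows "\<exists>n0. \<forall>n\<ge>n0.
    real (card {N \<in> Hn H n. compatible Rels ar Cs M A k N}) =
    real (card (Omega Rels ar A k {1..n})) / real (card (AutStar Rels Cs M A k))"
proof -
  have "wf_struc Rels ar Cs M" using assms(3,6) unfolding hereditary_def by blast
  then interpret class_enumeration Rels ar Cs M A k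
    using assms(1,8) by unfold_locales
  show ?thesis
    using card_Omega_eq[OF assms(3,6)] card_AutStar_pos by (simp add: field_simps)
qed

end
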